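(* Let $n,k\ge1$, let $D=\{x\in\{0,\ldots,k-1\}^n:(\sum_i x_i)\bmod k=0\}$ and for $x\in D$ let $F(x)=\frac1k\big[(\sum_{i=1}^n x_i)\bmod 2k\big]\in\{0,1\}$. In the model where the $n$ parties share prior entanglement and communicate by classical broadcast, the communication complexity of computing $F(x)$ (on inputs $x\in D$, party $i$ holding $x_i$) is $O(n)$.
   Context: In the model with prior entanglement, the parties share an arbitrary entangled quantum state (e.g. the $n$-qubit state $(|0^n\rangle+|1^n\rangle)/\sqrt2$, one qubit per party), may perform local measurements depending on their inputs, and then broadcast classical bits; the communication complexity is the number of classical bits broadcast needed so that the parties can determine $F(x)$. *)

theory Defs
  imports Complex_Main "HOL-Library.FuncSet"
begin

definition ghz_dom :: "nat \<Rightarrow> nat \<Rightarrow> (nat \<Rightarrow> nat) set" where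
  "ghz_dom n k = {x \<in> Pi\<^sub>E {..<n} (\<lambda>_. {..<k}). (\<Sum>i<n. x i) mod k = 0}"

definition ghz_F :: "nat \<Rightarrow> nat \<Rightarrow> (nat \<Rightarrow> nat) \<Rightarrow> nat" where
  "ghz_F n k x = ((\<Sum>i<n. x i) mod (2 * k)) div k"

text \<open>Joint index set of the shared state: party i owns a local system of dimension d i.\<close>
definition joint_idx :: "nat \<Rightarrow> (nat \<Rightarrow> nat) \<Rightarrow> (nat \<Rightarrow> nat) set" where
  "joint_idx n d = Pi\<^sub>E {..<n} (\<lambda>i. {..<d i})"

text \<open>A d x d complex matrix (rows indexed by outcome, columns by basis index) is unitary.\<close>
definition unitary_mat :: "nat \<Rightarrow> (nat \<Rightarrow> nat \<Rightarrow> complex) \<Rightarrow> bool" where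
  "unitary_mat dd M \<longleftrightarrow>
     (\<forall>a<dd. \<forall>a'<dd. (\<Sum>b<dd. M a b * cnj (M a' b)) = (if a = a' then 1 else 0))"

text \<open>Born rule: probability of joint outcome a when party i measures its subsystem
  in the orthonormal basis given by the rows of U i (x i).\<close>
definition outcome_prob ::
  "nat \<Rightarrow> (nat \<Rightarrow> nat) \<Rightarrow> ((nat \<Rightarrow> nat) \<Rightarrow> complex) \<Rightarrow>
   (nat \<Rightarrow> nat \<Rightarrow> nat \<Rightarrow> nat \<Rightarrow> complex) \<Rightarrow> (nat \<Rightarrow> nat) \<Rightarrow> (nat \<Rightarrow> nat) \<Rightarrow> real" where
  "outcome_prob n d \<psi> U x a =
     (cmod (\<Sum>j\<in>joint_idx n d. \<psi> j * (\<Prod>i<n. cnj (U i (x i) (a i) (j i))))) ^ 2"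

text \<open>Classical broadcast phase: L rounds; in each round the speaker (determined by the
  transcript so far) broadcasts one bit computed from its input, its measurement outcome
  and the transcript so far.\<close>
fun transcript ::
  "(bool list \<Rightarrow> nat) \<Rightarrow> (nat \<Rightarrow> nat \<Rightarrow> nat \<Rightarrow> bool list \<Rightarrow> bool) \<Rightarrow>
   (nat \<Rightarrow> nat) \<Rightarrow> (nat \<Rightarrow> nat) \<Rightarrow> nat \<Rightarrow> bool list" where
  "transcript spk msg x a 0 = []"
| "transcript spk msg x a (Suc m) =
     (let t = transcript spk msg x a m; i = spk t in t @ [msg i (x i) (a i) t])"

text \<open>An entanglement-assisted broadcast protocol with L broadcast bits that computes F
  exactly on domain D: for every input in D and every measurement outcome of positive
  probability, the (public) transcript determines F(x).\<close>
definition ent_protocol_computes ::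
  "nat \<Rightarrow> (nat \<Rightarrow> nat) set \<Rightarrow> ((nat \<Rightarrow> nat) \<Rightarrow> nat) \<Rightarrow>
   (nat \<Rightarrow> nat) \<Rightarrow> ((nat \<Rightarrow> nat) \<Rightarrow> complex) \<Rightarrow> (nat \<Rightarrow> nat \<Rightarrow> nat \<Rightarrow> nat \<Rightarrow> complex) \<Rightarrow>
   (bool list \<Rightarrow> nat) \<Rightarrow> (nat \<Rightarrow> nat \<Rightarrow> nat \<Rightarrow> bool list \<Rightarrow> bool) \<Rightarrow> nat \<Rightarrow> (bool list \<Rightarrow> nat) \<Rightarrow> bool" where
  "ent_protocol_computes n D F d \<psi> U spk msg L out \<longleftrightarrow>
     (\<forall>i<n. 1 \<le> d i) \<and>
     (\<Sum>j\<in>joint_idx n d. (cmod (\<psi> j)) ^ 2) = 1 \<and>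
     (\<forall>i<n. \<forall>v. unitary_mat (d i) (U i v)) \<and>
     (\<forall>t. spk t < n) \<and>
     (\<forall>x\<in>D. \<forall>a\<in>joint_idx n d. outcome_prob n d \<psi> U x a > 0 \<longrightarrow>
        out (transcript spk msg x a L) = F x)"

definition ent_cc_le :: "nat \<Rightarrow> (nat \<Rightarrow> nat) set \<Rightarrow> ((nat \<Rightarrow> nat) \<Rightarrow> nat) \<Rightarrow> nat \<Rightarrow> bool" where
  "ent_cc_le n D F L \<longleftrightarrow>
     (\<exists>d \<psi> U spk msg out. ent_protocol_computes n D F d \<psi> U spk msg L out)"

end

theory Submission
  imports Defs
begin

(* Party i multiplies the |1> component of its qubit of the GHZ state (|0...0> + |1...1>)/sqrt 2
   by the phase e^(i pi x_i / k) and measures in the Hadamard basis. Outcome a then has amplitude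
   proportional to 1 + (-1)^(sum a) e^(i pi (sum x) / k). If sum x = m k this is
   1 + (-1)^(sum a + m), so every outcome that occurs has sum a = m = F(x) (mod 2), and
   broadcasting the n outcome bits determines F(x). *)

lemma cis_sum: "finite A \<Longrightarrow> cis (\<Sum>i\<in>A. f i) = (\<Prod>i\<in>A. cis (f i))"
  by (induction A rule: finite_induct) (simp_all add: cis_mult [symmetric])

lemma sum_supported_on_two_points:
  assumes "finite S" "p \<in> S" "q \<in> S" "p \<noteq> q"
  shows "(\<Sum>j\<in>S. if j \<in> {p, q} then g j else 0) = g p + g q"
proof -
  have "(\<Sum>j\<in>S. if j \<in> {p, q} then g j else 0) = (\<Sum>j\<in>S \<inter> {p, q}. g j)"
    using assms(1) by (simp add: sum.inter_restrict)
  also have "S \<inter> {p, q} = {p, q}"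
    using assms(2,3) by auto
  finally show ?thesis
    using assms(4) by simp
qed

definition const_idx :: "nat \<Rightarrow> nat \<Rightarrow> nat \<Rightarrow> nat" where
  "const_idx n v = restrict (\<lambda>_. v) {..<n}"

lemma const_idx_in_joint_idx: "(\<And>i. i < n \<Longrightarrow> v < d i) \<Longrightarrow> const_idx n v \<in> joint_idx n d"
  unfolding const_idx_def joint_idx_def by auto

lemma const_idx_eq_iff:
  assumes "1 \<le> n"
  shows "const_idx n v = const_idx n w \<longleftrightarrow> v = w"
proof
  assume "const_idx n v = const_idx n w"
  then have "const_idx n v 0 = const_idx n w 0"
    by simp
  then show "v = w"
    using assms by (simp add: const_idx_def)
qed simp

definition inv_sqrt2 :: complex where
  "inv_sqrt2 = of_real (1 / sqrt 2)"

lemma inv_sqrt2_sq: "inv_sqrt2 * inv_sqrt2 = 1 / 2"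
  unfolding inv_sqrt2_def by (simp flip: of_real_mult)

lemma cnj_inv_sqrt2 [simp]: "cnj inv_sqrt2 = inv_sqrt2"
  unfolding inv_sqrt2_def by simp

lemma cmod_inv_sqrt2_sq: "(cmod inv_sqrt2)\<^sup>2 = 1 / 2"
  unfolding inv_sqrt2_def norm_of_real by (simp add: power_divide)

definition ghz_state :: "nat \<Rightarrow> (nat \<Rightarrow> nat) \<Rightarrow> complex" where
  "ghz_state n j = (if j \<in> {const_idx n 0, const_idx n 1} then inv_sqrt2 else 0)"

lemma sum_over_ghz_support:
  assumes "1 \<le> n"
  shows "(\<Sum>j\<in>joint_idx n (\<lambda>_. 2). if j \<in> {const_idx n 0, const_idx n 1} then g j else 0)
    = g (const_idx n 0) + g (const_idx n 1)"
proof (rule sum_supported_on_two_points)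
  show "finite (joint_idx n (\<lambda>_. 2))"
    unfolding joint_idx_def by (simp add: finite_PiE)
qed (use assms in \<open>simp_all add: const_idx_in_joint_idx const_idx_eq_iff\<close>)

lemma ghz_state_normalized:
  assumes "1 \<le> n"
  shows "(\<Sum>j\<in>joint_idx n (\<lambda>_. 2). (cmod (ghz_state n j))\<^sup>2) = 1"
proof -
  have "(\<Sum>j\<in>joint_idx n (\<lambda>_. 2). (cmod (ghz_state n j))\<^sup>2)
      = (\<Sum>j\<in>joint_idx n (\<lambda>_. 2). if j \<in> {const_idx n 0, const_idx n 1} then 1 / 2 else 0)"
    by (intro sum.cong) (auto simp: ghz_state_def cmod_inv_sqrt2_sq)
  then show ?thesis
    using sum_over_ghz_support[OF assms, of "\<lambda>_. 1 / 2 :: real"] by simp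
qed

lemma ghz_amplitude:
  assumes "1 \<le> n"
  shows "(\<Sum>j\<in>joint_idx n (\<lambda>_. 2). ghz_state n j * (\<Prod>i<n. cnj (U i (x i) (a i) (j i))))
    = inv_sqrt2 * ((\<Prod>i<n. cnj (U i (x i) (a i) 0)) + (\<Prod>i<n. cnj (U i (x i) (a i) 1)))"
proof -
  have const_idx_prod: "(\<Prod>i<n. cnj (U i (x i) (a i) (const_idx n v i))) = (\<Prod>i<n. cnj (U i (x i) (a i) v))" for v
    by (intro prod.cong) (auto simp: const_idx_def)
  have "(\<Sum>j\<in>joint_idx n (\<lambda>_. 2). ghz_state n j * (\<Prod>i<n. cnj (U i (x i) (a i) (j i))))
      = (\<Sum>j\<in>joint_idx n (\<lambda>_. 2). if j \<in> {const_idx n 0, const_idx n 1}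
          then inv_sqrt2 * (\<Prod>i<n. cnj (U i (x i) (a i) (j i))) else 0)"
    by (intro sum.cong) (auto simp: ghz_state_def)
  also have "\<dots> = inv_sqrt2 * ((\<Prod>i<n. cnj (U i (x i) (a i) 0)) + (\<Prod>i<n. cnj (U i (x i) (a i) 1)))"
    unfolding sum_over_ghz_support[OF assms] const_idx_prod by (simp add: distrib_left)
  finally show ?thesis .
qed

(* Row a is the basis vector (|0> + (-1)^a e^(-i pi v / k) |1>) / sqrt 2. *)
definition phase_hadamard :: "nat \<Rightarrow> nat \<Rightarrow> nat \<Rightarrow> nat \<Rightarrow> complex" where
  "phase_hadamard k v a b = inv_sqrt2 * (-1) ^ (a * b) * cis (- (pi * real v * real b / real k))"

lemma phase_hadamard_mult_cnj:
  "phase_hadamard k v a b * cnj (phase_hadamard k v a' b) = (-1) ^ ((a + a') * b) / 2"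
proof -
  define \<theta> where "\<theta> = pi * real v * real b / real k"
  have "phase_hadamard k v a b * cnj (phase_hadamard k v a' b)
      = (inv_sqrt2 * inv_sqrt2) * ((-1) ^ (a * b) * (-1) ^ (a' * b)) * (cis (- \<theta>) * cis \<theta>)"
    by (simp add: phase_hadamard_def \<theta>_def cis_cnj mult_ac)
  also have "\<dots> = (-1) ^ ((a + a') * b) / 2"
    by (simp add: inv_sqrt2_sq cis_mult add_mult_distrib power_add)
  finally show ?thesis .
qed

lemma unitary_phase_hadamard: "unitary_mat 2 (phase_hadamard k v)"
  unfolding unitary_mat_def
proof (intro allI impI)
  fix a a' :: nat
  assume "a < 2" "a' < 2"
  then have "a \<in> {0, 1}" "a' \<in> {0, 1}"
    by auto
  then show "(\<Sum>b<2. phase_hadamard k v a b * cnj (phase_hadamard k v a' b)) = (if a = a' then 1 else 0)"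
    by (auto simp: phase_hadamard_mult_cnj numeral_2_eq_2)
qed

lemma prod_cnj_phase_hadamard:
  "(\<Prod>i<n. cnj (phase_hadamard k (x i) (a i) b))
    = inv_sqrt2 ^ n * (-1) ^ (b * (\<Sum>i<n. a i)) * cis (pi * real b * real (\<Sum>i<n. x i) / real k)"
proof -
  have "(\<Prod>i<n. cnj (phase_hadamard k (x i) (a i) b))
      = (\<Prod>i<n. inv_sqrt2 * (-1) ^ (b * a i) * cis (pi * real b * real (x i) / real k))"
    by (intro prod.cong) (auto simp: phase_hadamard_def cis_cnj mult_ac)
  also have "\<dots> = inv_sqrt2 ^ n * (\<Prod>i<n. (-1) ^ (b * a i)) * cis (\<Sum>i<n. pi * real b * real (x i) / real k)"
    by (simp add: prod.distrib cis_sum)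
  also have "\<dots> = inv_sqrt2 ^ n * (-1) ^ (b * (\<Sum>i<n. a i)) * cis (pi * real b * real (\<Sum>i<n. x i) / real k)"
    by (simp add: power_sum sum_distrib_left sum_divide_distrib)
  finally show ?thesis .
qed

lemma ghz_phase_hadamard_amplitude:
  assumes "1 \<le> n"
  shows "(\<Sum>j\<in>joint_idx n (\<lambda>_. 2). ghz_state n j * (\<Prod>i<n. cnj (phase_hadamard k (x i) (a i) (j i))))
    = inv_sqrt2 ^ Suc n * (1 + (-1) ^ (\<Sum>i<n. a i) * cis (pi * real (\<Sum>i<n. x i) / real k))"
  using ghz_amplitude[OF assms, of "\<lambda>_. phase_hadamard k" x a]
  by (simp add: prod_cnj_phase_hadamard algebra_simps)

lemma ghz_outcome_parity:
  assumes "1 \<le> n" "0 < k" "(\<Sum>i<n. x i) = m * k"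
    and "outcome_prob n (\<lambda>_. 2) (ghz_state n) (\<lambda>_. phase_hadamard k) x a > 0"
  shows "(\<Sum>i<n. a i) mod 2 = m mod 2"
proof -
  have "cis (pi * real (\<Sum>i<n. x i) / real k) = cis (real m * pi)"
    using assms(2,3) by (simp add: mult.commute)
  also have "\<dots> = (-1) ^ m"
    by (simp flip: DeMoivre)
  finally have "(1::complex) + (-1) ^ (\<Sum>i<n. a i) * (-1) ^ m \<noteq> 0"
    using assms(4) by (auto simp: outcome_prob_def ghz_phase_hadamard_amplitude[OF assms(1)])
  then have "(1::complex) + (-1) ^ ((\<Sum>i<n. a i) + m) \<noteq> 0"
    by (simp add: power_add)
  then have "even ((\<Sum>i<n. a i) + m)"
    by (cases "even ((\<Sum>i<n. a i) + m)") auto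
  then show ?thesis
    by (auto simp: mod2_eq_if)
qed

definition round_robin :: "nat \<Rightarrow> bool list \<Rightarrow> nat" where
  "round_robin n t = length t mod n"

definition broadcast_outcome :: "nat \<Rightarrow> nat \<Rightarrow> nat \<Rightarrow> bool list \<Rightarrow> bool" where
  "broadcast_outcome i v b t \<longleftrightarrow> b = 1"

definition parity :: "bool list \<Rightarrow> nat" where
  "parity t = sum_list (map of_bool t) mod 2"

lemma transcript_round_robin:
  "m \<le> n \<Longrightarrow> transcript (round_robin n) broadcast_outcome x a m = map (\<lambda>i. a i = 1) [0..<m]"
  by (induction m) (auto simp: round_robin_def broadcast_outcome_def Let_def)

lemma parity_transcript_round_robin:
  assumes "a \<in> joint_idx n (\<lambda>_. 2)"
  shows "parity (transcript (round_robin n) broadcast_outcome x a n) = (\<Sum>i<n. a i) mod 2"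
proof -
  have "sum_list (map of_bool (map (\<lambda>i. a i = 1) [0..<n])) = (\<Sum>i<n. of_bool (a i = 1) :: nat)"
    by (simp only: map_map o_def lessThan_atLeast0 set_upt flip: sum_set_upt_conv_sum_list_nat)
  also have "\<dots> = (\<Sum>i<n. a i)"
    using assms unfolding joint_idx_def by (intro sum.cong) (auto simp: PiE_iff less_2_cases_iff)
  finally show ?thesis
    by (simp add: parity_def transcript_round_robin)
qed

lemma ghz_F_eq_quotient_mod_2:
  assumes "0 < k" "(\<Sum>i<n. x i) = m * k"
  shows "ghz_F n k x = m mod 2"
  using assms by (simp add: ghz_F_def mult_mod_left)

lemma ghz_protocol_computes_ghz_F:
  assumes "1 \<le> n" "1 \<le> k"
  shows "ent_protocol_computes n (ghz_dom n k) (ghz_F n k) (\<lambda>_. 2) (ghz_state n) (\<lambda>_. phase_hadamard k)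
           (round_robin n) broadcast_outcome n parity"
  unfolding ent_protocol_computes_def
proof (intro conjI ballI allI impI)
  fix x a
  assume x: "x \<in> ghz_dom n k" and a: "a \<in> joint_idx n (\<lambda>_. 2)"
    and pos: "outcome_prob n (\<lambda>_. 2) (ghz_state n) (\<lambda>_. phase_hadamard k) x a > 0"
  obtain m where m: "(\<Sum>i<n. x i) = m * k"
    using x by (auto simp: ghz_dom_def mod_eq_0_iff_dvd dvd_def mult.commute)
  show "parity (transcript (round_robin n) broadcast_outcome x a n) = ghz_F n k x"
    using assms ghz_outcome_parity[OF _ _ m pos] parity_transcript_round_robin[OF a] ghz_F_eq_quotient_mod_2[OF _ m]
    by simp
qed (use assms in \<open>auto simp: ghz_state_normalized unitary_phase_hadamard round_robin_def\<close>)

theorem lemma1: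
  shows "\<exists>C::nat. \<forall>n k::nat. 1 \<le> n \<longrightarrow> 1 \<le> k \<longrightarrow>
           (\<exists>L. L \<le> C * n \<and> ent_cc_le n (ghz_dom n k) (ghz_F n k) L)"
proof (rule exI[of _ 1], intro allI impI)
  fix n k :: nat
  assume "1 \<le> n" "1 \<le> k"
  then have "ent_cc_le n (ghz_dom n k) (ghz_F n k) n"
    unfolding ent_cc_le_def using ghz_protocol_computes_ghz_F by blast
  then show "\<exists>L. L \<le> 1 * n \<and> ent_cc_le n (ghz_dom n k) (ghz_F n k) L"
    by auto
qed

end
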